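(* Let $n\ge2$, $f\in C^n(\mathbb{R})$ and $\xi\in\mathbb{R}$. Let $2\le\kappa\le n$, let $\alpha=(\alpha_0,\dots,\alpha_\kappa)\in\mathbb{N}_{\ge0}^{\kappa+1}$ with $|\alpha|=\alpha_0+\dots+\alpha_\kappa\le n+1$, and let $(\lambda_0,\dots,\lambda_\kappa)\in\mathbb{R}^{\kappa+1}$ be such that for some $i\ne j$ we have $\lambda_i\ne\lambda_j$ and $\alpha_i,\alpha_j>0$. Then \begin{align*} f[\lambda_i^{(\alpha_i)},\lambda_j^{(\alpha_j)},\widetilde\lambda^{(\widetilde\alpha)}] =&\sum_{l=0}^{\alpha_i-1}\binom{\alpha_j+l-1}{l}\Big(\frac{\lambda_i-\xi}{\lambda_i-\lambda_j}\Big)^{\alpha_j}\Big(\frac{\xi-\lambda_j}{\lambda_i-\lambda_j}\Big)^{l} f[\lambda_i^{(\alpha_i-l)},\xi^{(\alpha_j+l)},\widetilde\lambda^{(\widetilde\alpha)}]\\ &+\sum_{l=0}^{\alpha_j-1}\binom{\alpha_i+l-1}{l}\Big(\frac{\lambda_i-\xi}{\lambda_i-\lambda_j}\Big)^{l}\Big(\frac{\xi-\lambda_j}{\lambda_i-\lambda_j}\Big)^{\alpha_i} f[\xi^{(\alpha_i+l)},\lambda_j^{(\alpha_j-l)},\widetilde\lambda^{(\widetilde\alpha)}], \end{align*} where $\widetilde\lambda^{(\widetilde\alpha)}$ denotes the list of the remaining variables $\lambda_m^{(\alpha_m)}$, $m\in\{0,\dots,\kappa\}\setminus\{i,j\}$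.
   Context: Divided differences: for $f\in C^n(\mathbb{R})$ set $f^{[0]}=f$ and for $1\le k\le n$, $f^{[k]}(\lambda_0,\lambda_1,\lambda)=\frac{f^{[k-1]}(\lambda_0,\lambda)-f^{[k-1]}(\lambda_1,\lambda)}{\lambda_0-\lambda_1}$ if $\lambda_0\ne\lambda_1$, and $=\frac{d}{d\mu}f^{[k-1]}(\mu,\lambda)|_{\mu=\lambda_0}$ if $\lambda_0=\lambda_1$ ($\lambda\in\mathbb{R}^{k-1}$); these are symmetric in their arguments. Notation with repeated variables: for reals $\mu_0,\dots,\mu_m$ and nonnegative integers $\beta_0,\dots,\beta_m$ with $N:=\beta_0+\dots+\beta_m\ge1$, $f[\mu_0^{(\beta_0)},\dots,\mu_m^{(\beta_m)}]:=f^{[N-1]}(\mu_0,\dots,\mu_0,\dots,\mu_m,\dots,\mu_m)$ where $\mu_r$ is repeated $\beta_r$ times (entries with multiplicity $0$ are omitted). *)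

theory Defs
  imports "HOL-Analysis.Analysis"
begin

definition C_n :: "nat \<Rightarrow> (real \<Rightarrow> real) \<Rightarrow> bool" where
  "C_n n f \<longleftrightarrow> (\<forall>k<n. \<forall>x. ((deriv ^^ k) f) differentiable (at x))
                 \<and> continuous_on UNIV ((deriv ^^ n) f)"

fun dd :: "(real \<Rightarrow> real) \<Rightarrow> real list \<Rightarrow> real" where
  "dd f [] = 0"
| "dd f [x] = f x"
| "dd f (x0 # x1 # xs) =
     (if x0 \<noteq> x1 then (dd f (x0 # xs) - dd f (x1 # xs)) / (x0 - x1)
      else deriv (\<lambda>\<mu>. dd f (\<mu> # xs)) x0)"

definition ddm :: "(real \<Rightarrow> real) \<Rightarrow> (real \<times> nat) list \<Rightarrow> real" where
  "ddm f ps = dd f (concat (map (\<lambda>(\<mu>, b). replicate b \<mu>) ps))"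

definition rest :: "nat \<Rightarrow> (nat \<Rightarrow> real) \<Rightarrow> (nat \<Rightarrow> nat) \<Rightarrow> nat \<Rightarrow> nat \<Rightarrow> (real \<times> nat) list" where
  "rest \<kappa> lam \<alpha> i j = map (\<lambda>m. (lam m, \<alpha> m)) (filter (\<lambda>m. m \<noteq> i \<and> m \<noteq> j) [0..<Suc \<kappa>])"

end

theory Submission
  imports Defs
begin

text \<open>For \<open>a \<noteq> b\<close> the identity \<open>(a - b) f[a,b,S] = (a - \<xi>) f[a,\<xi>,S] + (\<xi> - b) f[\<xi>,b,S]\<close>
  rewrites a divided difference containing both \<open>a\<close> and \<open>b\<close> as a combination, with weights
  \<open>u = (a - \<xi>)/(a - b)\<close> and \<open>v = (\<xi> - b)/(a - b)\<close>, of two in which one copy of \<open>a\<close> or of \<open>b\<close>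
  is replaced by \<open>\<xi>\<close>. Iterating until all copies of \<open>a\<close> or all copies of \<open>b\<close> are used up is a
  lattice path count, which produces the negative binomial weights. Each step reorders the nodes,
  so it relies on the symmetry of divided differences; for the recursive definition this needs
  \<open>\<mu> \<mapsto> f[\<mu>,T]\<close> to be of class \<open>C\<^sup>k\<close>, \<open>k = n - length T\<close>, which follows inductively from
  \<open>g[\<mu>,y] = \<integral>\<^sub>0\<^sup>1 g'(y + t (\<mu> - y)) dt\<close>.\<close>

definition first_dd :: "(real \<Rightarrow> real) \<Rightarrow> real \<Rightarrow> real \<Rightarrow> real" where
  "first_dd g x y = (if x \<noteq> y then (g x - g y) / (x - y) else deriv g x)"

text \<open>Equivalent to \<^const>\<open>C_n\<close>, but with the derivatives given explicitly, so that no
  reasoning about \<^const>\<open>deriv\<close> of functions not yet known to be differentiable is needed.\<close>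
definition cont_diff :: "nat \<Rightarrow> (real \<Rightarrow> real) \<Rightarrow> bool" where
  "cont_diff k g \<longleftrightarrow> (\<exists>D. D 0 = g \<and> (\<forall>j<k. \<forall>x. (D j has_real_derivative D (Suc j) x) (at x))
      \<and> continuous_on UNIV (D k))"

lemma C_n_imp_cont_diff: "C_n n f \<Longrightarrow> cont_diff n f"
  unfolding C_n_def cont_diff_def
  by (rule exI[of _ "\<lambda>k. (deriv ^^ k) f"]) (simp add: DERIV_deriv_iff_real_differentiable)

lemma cont_diff_has_real_derivative:
  assumes "cont_diff (Suc k) g"
  shows "(g has_real_derivative deriv g x) (at x)"
proof -
  obtain D where "D 0 = g" "\<forall>j<Suc k. \<forall>x. (D j has_real_derivative D (Suc j) x) (at x)"
    using assms unfolding cont_diff_def by blast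
  then have "(g has_real_derivative D 1 x) (at x)" by fastforce
  then show ?thesis by (metis DERIV_imp_deriv)
qed

lemma continuous_on_segment_integrand:
  assumes "continuous_on UNIV h"
  shows "continuous_on (UNIV \<times> cbox 0 1) (\<lambda>(\<mu>, t::real). t ^ j * h (y + t * (\<mu> - y)))"
proof -
  have "continuous_on (UNIV \<times> cbox 0 1) (\<lambda>p::real \<times> real. h (y + snd p * (fst p - y)))"
    by (rule continuous_on_compose2[OF assms]) (auto intro!: continuous_intros)
  then show ?thesis
    by (auto simp: case_prod_beta intro!: continuous_intros)
qed

lemma first_dd_eq_integral:
  assumes g': "\<And>x. (g has_real_derivative g' x) (at x)"
  shows "first_dd g \<mu> y = integral (cbox 0 1) (\<lambda>t. g' (y + t * (\<mu> - y)))"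
proof (cases "\<mu> = y")
  case True
  then show ?thesis using g' by (simp add: first_dd_def DERIV_imp_deriv)
next
  case False
  have "((\<lambda>t. (\<mu> - y) * g' (y + t * (\<mu> - y))) has_integral
         g (y + 1 * (\<mu> - y)) - g (y + 0 * (\<mu> - y))) {0..1}"
  proof (rule fundamental_theorem_of_calculus)
    fix t :: real
    have "((\<lambda>t. g (y + t * (\<mu> - y))) has_real_derivative g' (y + t * (\<mu> - y)) * (\<mu> - y)) (at t)"
      using g' by (auto intro!: derivative_eq_intros DERIV_chain2[where f = g])
    then show "((\<lambda>t. g (y + t * (\<mu> - y))) has_vector_derivative (\<mu> - y) * g' (y + t * (\<mu> - y)))
        (at t within {0..1})"
      by (simp add: has_real_derivative_iff_has_vector_derivative[symmetric] mult.commute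
          has_field_derivative_at_within)
  qed simp
  from has_integral_mult_right[OF this, of "1 / (\<mu> - y)"]
  have "((\<lambda>t. g' (y + t * (\<mu> - y))) has_integral (g \<mu> - g y) / (\<mu> - y)) {0..1}"
    using False by simp
  then show ?thesis using False by (simp add: first_dd_def integral_unique)
qed

lemma has_real_derivative_segment_integral:
  assumes h': "\<And>x. (h has_real_derivative h' x) (at x)" and "continuous_on UNIV h'"
  shows "((\<lambda>\<mu>. integral (cbox 0 1) (\<lambda>t. t ^ j * h (y + t * (\<mu> - y)))) has_real_derivative
           integral (cbox 0 1) (\<lambda>t. t ^ Suc j * h' (y + t * (x - y)))) (at x)"
proof -
  have "continuous_on UNIV h"
    using h' DERIV_isCont by (blast intro: continuous_at_imp_continuous_on)
  then have "(\<lambda>t. t ^ j * h (y + t * (\<mu> - y))) integrable_on cbox 0 1" for \<mu>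
    by (intro integrable_continuous)
      (auto intro!: continuous_intros continuous_on_compose2[of UNIV h])
  moreover have "((\<lambda>\<mu>. t ^ j * h (y + t * (\<mu> - y))) has_real_derivative
      t ^ Suc j * h' (y + t * (\<mu> - y))) (at \<mu>)" for \<mu> t
  proof -
    have "((\<lambda>\<mu>. y + t * (\<mu> - y)) has_real_derivative t) (at \<mu>)"
      by (auto intro!: derivative_eq_intros)
    from DERIV_cmult[OF DERIV_chain2[OF h' this], of "t ^ j"] show ?thesis
      by (simp add: algebra_simps)
  qed
  ultimately show ?thesis
    using leibniz_rule_field_derivative[of UNIV 0 1 "\<lambda>\<mu> t. t ^ j * h (y + t * (\<mu> - y))"
        "\<lambda>\<mu> t. t ^ Suc j * h' (y + t * (\<mu> - y))" x]
      continuous_on_segment_integrand[OF assms(2), of "Suc j" y]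
    by simp
qed

lemma cont_diff_first_dd:
  assumes "cont_diff (Suc k) g"
  shows "cont_diff k (\<lambda>\<mu>. first_dd g \<mu> y)"
proof -
  obtain D where D0: "D 0 = g"
    and D: "\<forall>j<Suc k. \<forall>x. (D j has_real_derivative D (Suc j) x) (at x)"
    and cont: "continuous_on UNIV (D (Suc k))"
    using assms unfolding cont_diff_def by blast
  have cont_D: "continuous_on UNIV (D m)" if "m \<le> Suc k" for m
  proof (cases "m = Suc k")
    case False
    with that D have "\<forall>x. isCont (D m) x" by (metis DERIV_isCont le_less)
    then show ?thesis by (simp add: continuous_at_imp_continuous_on)
  qed (use cont in simp)
  define E where "E j \<mu> = integral (cbox 0 1) (\<lambda>t. t ^ j * D (Suc j) (y + t * (\<mu> - y)))" for j \<mu>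
  have "E 0 = (\<lambda>\<mu>. first_dd g \<mu> y)"
    using first_dd_eq_integral[of g "D 1"] D0 D by (auto simp: E_def)
  moreover have "(E j has_real_derivative E (Suc j) x) (at x)" if "j < k" for j x
    unfolding E_def
    by (rule has_real_derivative_segment_integral) (use D cont_D that in auto)
  moreover have "continuous_on UNIV (E k)"
    unfolding E_def by (intro integral_continuous_on_param continuous_on_segment_integrand cont_D) simp
  ultimately show ?thesis
    unfolding cont_diff_def by blast
qed

lemma dd_Cons_Cons: "dd f (x # y # T) = first_dd (\<lambda>\<mu>. dd f (\<mu> # T)) x y"
  by (simp add: first_dd_def)

lemma cont_diff_dd:
  "cont_diff n f \<Longrightarrow> length T \<le> n \<Longrightarrow> cont_diff (n - length T) (\<lambda>\<mu>. dd f (\<mu> # T))"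
proof (induction T)
  case (Cons x T)
  then have "cont_diff (Suc (n - length (x # T))) (\<lambda>\<mu>. dd f (\<mu> # T))"
    by (simp add: Suc_diff_Suc)
  from cont_diff_first_dd[OF this, of x] show ?case
    by (simp only: dd_Cons_Cons)
qed simp

lemma dd_swap: "dd f (x # y # T) = dd f (y # x # T)"
  by (cases "x = y") (auto simp: field_simps)

lemma dd_Cons_same_Cons:
  assumes "((\<lambda>\<mu>. dd f (\<mu> # T)) has_real_derivative deriv (\<lambda>\<mu>. dd f (\<mu> # T)) x) (at x)"
    and "x \<noteq> z"
  shows "dd f (x # x # z # T) = (dd f (x # x # T) - dd f (z # x # T)) / (x - z)"
proof -
  define G where "G = (\<lambda>\<mu>. dd f (\<mu> # T))"
  have "((\<lambda>\<mu>. (G \<mu> - G z) / (\<mu> - z)) has_real_derivative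
      (deriv G x * (x - z) - (G x - G z)) / (x - z)\<^sup>2) (at x)"
    using assms by (auto simp: G_def power2_eq_square intro!: derivative_eq_intros)
  then have "((\<lambda>\<mu>. dd f (\<mu> # z # T)) has_real_derivative
      (deriv G x * (x - z) - (G x - G z)) / (x - z)\<^sup>2) (at x)"
    by (rule has_field_derivative_transform_within_open[where S = "- {z}"])
      (use \<open>x \<noteq> z\<close> in \<open>auto simp: G_def\<close>)
  then show ?thesis
    using \<open>x \<noteq> z\<close>
    by (simp add: DERIV_imp_deriv G_def divide_simps power2_eq_square) (simp add: algebra_simps)
qed

lemma dd_swap_second_third:
  assumes "cont_diff n f" and "length T + 2 \<le> n"
  shows "dd f (x # y # z # T) = dd f (x # z # y # T)"
proof -
  have "cont_diff (Suc (n - length T - 1)) (\<lambda>\<mu>. dd f (\<mu> # T))"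
    using cont_diff_dd[OF assms(1), of T] assms(2) by (simp add: Suc_diff_Suc)
  then have G': "((\<lambda>\<mu>. dd f (\<mu> # T)) has_real_derivative deriv (\<lambda>\<mu>. dd f (\<mu> # T)) x')
      (at x')" for x'
    by (rule cont_diff_has_real_derivative)
  consider "y = z" | "x = y" "x \<noteq> z" | "x = z" "x \<noteq> y" | "x \<noteq> y" "x \<noteq> z" "y \<noteq> z"
    by blast
  then show ?thesis
  proof cases
    case 4
    then show ?thesis
      by (simp add: divide_simps) (simp add: algebra_simps)
  qed (use dd_Cons_same_Cons[OF G'] in simp_all)
qed

lemma dd_Cons_swap_adjacent:
  assumes "cont_diff n f"
  shows "length (p # P @ x # y # T) \<le> n + 1 \<Longrightarrow>
    dd f (p # P @ x # y # T) = dd f (p # P @ y # x # T)"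
proof (induction P arbitrary: p)
  case Nil
  then show ?case using dd_swap_second_third[OF assms] by simp
next
  case (Cons q P)
  then have "(\<lambda>\<mu>. dd f (\<mu> # P @ x # y # T)) = (\<lambda>\<mu>. dd f (\<mu> # P @ y # x # T))"
    by simp
  then show ?case
    by (simp only: append_Cons dd_Cons_Cons)
qed

lemma dd_swap_adjacent:
  assumes "cont_diff n f" and "length (P @ x # y # T) \<le> n + 1"
  shows "dd f (P @ x # y # T) = dd f (P @ y # x # T)"
proof (cases P)
  case Nil
  then show ?thesis by (simp only: append_Nil dd_swap)
next
  case (Cons p P')
  then show ?thesis using dd_Cons_swap_adjacent[OF assms(1)] assms(2) by simp
qed

lemma dd_move_to_front:
  assumes "cont_diff n f"
  shows "length (P @ B1 @ a # B2) \<le> n + 1 \<Longrightarrow> dd f (P @ B1 @ a # B2) = dd f (P @ a # B1 @ B2)"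
proof (induction B1 arbitrary: P)
  case (Cons c B1)
  have "dd f (P @ (c # B1) @ a # B2) = dd f ((P @ [c]) @ a # B1 @ B2)"
    using Cons.IH[of "P @ [c]"] Cons.prems by simp
  also have "\<dots> = dd f (P @ a # c # B1 @ B2)"
    using dd_swap_adjacent[OF assms, of P c a "B1 @ B2"] Cons.prems by simp
  finally show ?case by simp
qed simp

lemma dd_append_perm:
  assumes "cont_diff n f"
  shows "mset A = mset B \<Longrightarrow> length (P @ A) \<le> n + 1 \<Longrightarrow> dd f (P @ A) = dd f (P @ B)"
proof (induction A arbitrary: P B)
  case (Cons a A)
  then have "a \<in> set B" by (metis list.set_intros(1) set_mset_mset)
  then obtain B1 B2 where B: "B = B1 @ a # B2" by (metis split_list)
  with Cons.prems(1) have perm: "mset A = mset (B1 @ B2)" by simp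
  have "dd f (P @ a # A) = dd f ((P @ [a]) @ A)" by simp
  also have "\<dots> = dd f ((P @ [a]) @ B1 @ B2)"
    using Cons.IH[OF perm, of "P @ [a]"] Cons.prems(2) by simp
  also have "\<dots> = dd f (P @ B)"
    using dd_move_to_front[OF assms, of P B1 a B2] Cons.prems(2) B mset_eq_length[OF perm]
    by simp
  finally show ?case .
qed simp

lemma dd_perm: "cont_diff n f \<Longrightarrow> mset A = mset B \<Longrightarrow> length A \<le> n + 1 \<Longrightarrow> dd f A = dd f B"
  using dd_append_perm[of n f A B "[]"] by simp

lemma dd_Cons_Cons_split:
  assumes "a \<noteq> b"
  shows "dd f (a # b # S)
    = (a - \<xi>) / (a - b) * dd f (a # \<xi> # S) + (\<xi> - b) / (a - b) * dd f (\<xi> # b # S)"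
proof -
  have diff: "(x - y) * dd f (x # y # S) = dd f (x # S) - dd f (y # S)" for x y
    by (cases "x = y") simp_all
  have "(a - b) * dd f (a # b # S) = (a - \<xi>) * dd f (a # \<xi> # S) + (\<xi> - b) * dd f (\<xi> # b # S)"
    unfolding diff by simp
  then have "dd f (a # b # S)
      = ((a - \<xi>) * dd f (a # \<xi> # S) + (\<xi> - b) * dd f (\<xi> # b # S)) / (a - b)"
    using assms by (simp add: eq_divide_eq mult.commute del: dd.simps)
  then show ?thesis
    by (simp add: add_divide_distrib del: dd.simps)
qed

lemma dd_replicate_split:
  assumes "cont_diff n f" and "a \<noteq> b" and "Suc p + Suc q + s + length R \<le> n + 1"
  shows "dd f (replicate (Suc p) a @ replicate s \<xi> @ replicate (Suc q) b @ R)
    = (a - \<xi>) / (a - b) * dd f (replicate (Suc p) a @ replicate (Suc s) \<xi> @ replicate q b @ R)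
    + (\<xi> - b) / (a - b) * dd f (replicate p a @ replicate (Suc s) \<xi> @ replicate (Suc q) b @ R)"
proof -
  define S where "S = replicate p a @ replicate s \<xi> @ replicate q b @ R"
  have "dd f (replicate (Suc p) a @ replicate s \<xi> @ replicate (Suc q) b @ R) = dd f (a # b # S)"
    and "dd f (replicate (Suc p) a @ replicate (Suc s) \<xi> @ replicate q b @ R) = dd f (a # \<xi> # S)"
    and "dd f (replicate p a @ replicate (Suc s) \<xi> @ replicate (Suc q) b @ R) = dd f (\<xi> # b # S)"
    by (rule dd_perm[OF assms(1)]; use assms(3) in \<open>simp add: S_def\<close>)+
  then show ?thesis
    using dd_Cons_Cons_split[OF assms(2)] by simp
qed

definition negbin_sum :: "(nat \<Rightarrow> nat \<Rightarrow> 'a::comm_semiring_1) \<Rightarrow> 'a \<Rightarrow> 'a \<Rightarrow> nat \<Rightarrow> nat \<Rightarrow> nat \<Rightarrow> 'a"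
  where "negbin_sum \<Phi> u v A B r =
    (\<Sum>l<A. of_nat ((B + l - 1) choose l) * u ^ B * v ^ l * \<Phi> (A - l) (r + B + l))"

lemma negbin_sum_0 [simp]: "negbin_sum \<Phi> u v 0 B r = 0"
  by (simp add: negbin_sum_def)

lemma negbin_sum_Suc_0 [simp]: "negbin_sum \<Phi> u v (Suc A) 0 r = \<Phi> (Suc A) r"
  by (simp add: negbin_sum_def sum.lessThan_Suc_shift binomial_eq_0 del: sum.lessThan_Suc)

lemma negbin_sum_Suc_Suc:
  "negbin_sum \<Phi> u v (Suc A) (Suc B) r =
    u * negbin_sum \<Phi> u v (Suc A) B (Suc r) + v * negbin_sum \<Phi> u v A (Suc B) (Suc r)"
proof -
  define t where "t k m = of_nat k * u ^ Suc B * v ^ Suc m * \<Phi> (A - m) (Suc (Suc (r + B + m)))" for k m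
  have "negbin_sum \<Phi> u v (Suc A) (Suc B) r = u ^ Suc B * \<Phi> (Suc A) (Suc (r + B))
      + (\<Sum>m<A. t ((B + m) choose Suc m) m + t ((B + m) choose m) m)"
    unfolding negbin_sum_def sum.lessThan_Suc_shift t_def by (simp add: algebra_simps)
  also have "\<dots> = u * negbin_sum \<Phi> u v (Suc A) B (Suc r) + v * negbin_sum \<Phi> u v A (Suc B) (Suc r)"
    unfolding negbin_sum_def sum.lessThan_Suc_shift t_def
    by (simp add: sum.distrib sum_distrib_left algebra_simps)
  finally show ?thesis .
qed

lemma negbin_expansion:
  fixes F :: "nat \<Rightarrow> nat \<Rightarrow> nat \<Rightarrow> 'a::comm_semiring_1"
  assumes split: "\<And>p q s. Suc p + Suc q + s \<le> N \<Longrightarrow>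
    F (Suc p) (Suc q) s = u * F (Suc p) q (Suc s) + v * F p (Suc q) (Suc s)"
  shows "0 < A + B \<Longrightarrow> A + B + r \<le> N \<Longrightarrow>
    F A B r = negbin_sum (\<lambda>p s. F p 0 s) u v A B r + negbin_sum (\<lambda>q s. F 0 q s) v u B A r"
proof (induction "A + B" arbitrary: A B r rule: less_induct)
  case less
  consider "A = 0" | "B = 0" | A' B' where "A = Suc A'" "B = Suc B'"
    by (meson not0_implies_Suc)
  then show ?case
  proof cases
    case 1
    with less.prems show ?thesis by (cases B) simp_all
  next
    case 2
    with less.prems show ?thesis by (cases A) simp_all
  next
    case 3
    have "F A B' (Suc r) = negbin_sum (\<lambda>p s. F p 0 s) u v A B' (Suc r)
        + negbin_sum (\<lambda>q s. F 0 q s) v u B' A (Suc r)"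
      and "F A' B (Suc r) = negbin_sum (\<lambda>p s. F p 0 s) u v A' B (Suc r)
        + negbin_sum (\<lambda>q s. F 0 q s) v u B A' (Suc r)"
      using less 3 by simp_all
    with split[of A' B' r] less.prems show ?thesis
      unfolding 3 negbin_sum_Suc_Suc by (simp add: algebra_simps)
  qed
qed

lemma length_rest:
  assumes "i \<le> \<kappa>" and "j \<le> \<kappa>" and "i \<noteq> j"
  shows "\<alpha> i + \<alpha> j + length (concat (map (\<lambda>(\<mu>, b). replicate b \<mu>) (rest \<kappa> lam \<alpha> i j)))
    = (\<Sum>m\<le>\<kappa>. \<alpha> m)"
proof -
  have "length (concat (map (\<lambda>(\<mu>, b). replicate b \<mu>) (rest \<kappa> lam \<alpha> i j)))
      = sum_list (map \<alpha> (filter (\<lambda>m. m \<noteq> i \<and> m \<noteq> j) [0..<Suc \<kappa>]))"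
    by (simp add: rest_def length_concat comp_def)
  also have "\<dots> = sum \<alpha> (set (filter (\<lambda>m. m \<noteq> i \<and> m \<noteq> j) [0..<Suc \<kappa>]))"
    by (rule sum_list_distinct_conv_sum_set) simp
  also have "set (filter (\<lambda>m. m \<noteq> i \<and> m \<noteq> j) [0..<Suc \<kappa>]) = {..\<kappa>} - {i} - {j}"
    by auto
  finally show ?thesis
    using assms by (simp add: sum.remove[of "{..\<kappa>}" i] sum.remove[of "{..\<kappa>} - {i}" j])
qed

theorem lemma3p1:
  fixes n \<kappa> i j :: nat and f :: "real \<Rightarrow> real" and \<xi> :: real
    and \<alpha> :: "nat \<Rightarrow> nat" and lam :: "nat \<Rightarrow> real"
  assumes "n \<ge> 2" and "C_n n f" and "2 \<le> \<kappa>" and "\<kappa> \<le> n"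
    and "(\<Sum>m\<le>\<kappa>. \<alpha> m) \<le> n + 1"
    and "i \<le> \<kappa>" and "j \<le> \<kappa>" and "i \<noteq> j" and "lam i \<noteq> lam j"
    and "\<alpha> i > 0" and "\<alpha> j > 0"
  shows "ddm f ([(lam i, \<alpha> i), (lam j, \<alpha> j)] @ rest \<kappa> lam \<alpha> i j) =
     (\<Sum>l<\<alpha> i. real ((\<alpha> j + l - 1) choose l)
        * ((lam i - \<xi>) / (lam i - lam j)) ^ \<alpha> j
        * ((\<xi> - lam j) / (lam i - lam j)) ^ l
        * ddm f ([(lam i, \<alpha> i - l), (\<xi>, \<alpha> j + l)] @ rest \<kappa> lam \<alpha> i j))
   + (\<Sum>l<\<alpha> j. real ((\<alpha> i + l - 1) choose l)
        * ((lam i - \<xi>) / (lam i - lam j)) ^ l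
        * ((\<xi> - lam j) / (lam i - lam j)) ^ \<alpha> i
        * ddm f ([(\<xi>, \<alpha> i + l), (lam j, \<alpha> j - l)] @ rest \<kappa> lam \<alpha> i j))"
proof -
  let ?a = "lam i" and ?b = "lam j"
  let ?u = "(?a - \<xi>) / (?a - ?b)" and ?v = "(\<xi> - ?b) / (?a - ?b)"
  define R where "R = concat (map (\<lambda>(\<mu>, b). replicate b \<mu>) (rest \<kappa> lam \<alpha> i j))"
  define F where "F p q s = dd f (replicate p ?a @ replicate s \<xi> @ replicate q ?b @ R)" for p q s
  have f: "cont_diff n f"
    using \<open>C_n n f\<close> by (rule C_n_imp_cont_diff)
  have "\<alpha> i + \<alpha> j + length R \<le> n + 1"
    using length_rest[OF \<open>i \<le> \<kappa>\<close> \<open>j \<le> \<kappa>\<close> \<open>i \<noteq> j\<close>] \<open>(\<Sum>m\<le>\<kappa>. \<alpha> m) \<le> n + 1\<close>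
    by (simp add: R_def)
  then have "F (\<alpha> i) (\<alpha> j) 0 = negbin_sum (\<lambda>p s. F p 0 s) ?u ?v (\<alpha> i) (\<alpha> j) 0
      + negbin_sum (\<lambda>q s. F 0 q s) ?v ?u (\<alpha> j) (\<alpha> i) 0"
    using \<open>\<alpha> i > 0\<close> unfolding F_def
    by (intro negbin_expansion[where N = "n + 1 - length R"] dd_replicate_split[OF f \<open>?a \<noteq> ?b\<close>])
      simp_all
  then show ?thesis
    by (simp add: F_def R_def ddm_def negbin_sum_def mult_ac)
qed

end
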